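(* Fix positive integers $\beta,p$. There is an algorithm which, given $n$ and an integer $m\in\{1,\ldots,M_n\}$ where $M_n=|\mathcal{S}_n(\beta,p)|$, outputs the vector $\mathbf{c}\in\mathcal{S}_n(\beta,p)$ with $ord(\mathbf{c})=m$; its time complexity and space complexity are both $O(n)$.
   Context: A binary vector is $(\beta,p)$-window-weight-limited (WWL) if every $\beta$ consecutive entries contain at most $p$ ones; $\mathcal{S}_n(\beta,p)$ is the set of $(\beta,p)$-WWL vectors of length $n$. For $\mathbf{x}=(x_1,\ldots,x_n)\in\{0,1\}^n$ let $\psi(\mathbf{x})=\sum_{k=1}^n x_k2^{n-k}$ (so $x_1$ is the most significant bit), and write $\mathbf{x}\preceq\mathbf{y}$ iff $\psi(\mathbf{x})\le\psi(\mathbf{y})$. For a set $X$ of distinct binary vectors of length $n$ and $\mathbf{x}\in X$, $ord(\mathbf{x})=|\{\mathbf{y}\in X:\mathbf{y}\preceq\mathbf{x}\}|$. Complexity is measured with $\beta,p$ fixed, counting arithmetic operations and storage of integers at unit cost. *)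

theory Defs
  imports Main
begin

text \<open>Binary vectors of length n are lists of booleans; xs!0 is x_1 (most significant bit).\<close>

definition wwl :: "nat \<Rightarrow> nat \<Rightarrow> bool list \<Rightarrow> bool" where
  "wwl \<beta> p xs \<longleftrightarrow> (\<forall>i<length xs. length (filter id (take \<beta> (drop i xs))) \<le> p)"

definition WWL :: "nat \<Rightarrow> nat \<Rightarrow> nat \<Rightarrow> bool list set" where
  "WWL n \<beta> p = {xs. length xs = n \<and> wwl \<beta> p xs}"

definition psi :: "bool list \<Rightarrow> nat" where
  "psi xs = (\<Sum>k<length xs. (if xs ! k then 2 ^ (length xs - 1 - k) else 0))"

definition ord_in :: "bool list set \<Rightarrow> bool list \<Rightarrow> nat" where
  "ord_in X x = card {y \<in> X. psi y \<le> psi x}"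

text \<open>Memory cells are indexed by nat and hold unbounded integers (unit cost).
  Each instruction is one arithmetic/memory/control operation.\<close>

datatype instr =
    LoadC nat int
  | Add nat nat nat
  | Sub nat nat nat
  | Mul nat nat nat
  | LoadI nat nat
  | StoreI nat nat
  | JumpPos nat nat
  | Jump nat
  | Halt

type_synonym conf = "nat \<times> (nat \<Rightarrow> int)"

fun exec :: "instr \<Rightarrow> conf \<Rightarrow> conf" where
  "exec (LoadC a c) (pc, m) = (Suc pc, m(a := c))"
| "exec (Add a b c) (pc, m) = (Suc pc, m(a := m b + m c))"
| "exec (Sub a b c) (pc, m) = (Suc pc, m(a := m b - m c))"
| "exec (Mul a b c) (pc, m) = (Suc pc, m(a := m b * m c))"
| "exec (LoadI a b) (pc, m) = (Suc pc, m(a := m (nat (m b))))"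
| "exec (StoreI a b) (pc, m) = (Suc pc, m(nat (m a) := m b))"
| "exec (JumpPos a l) (pc, m) = (if m a > 0 then l else Suc pc, m)"
| "exec (Jump l) (pc, m) = (l, m)"
| "exec Halt (pc, m) = (pc, m)"

fun touched :: "instr \<Rightarrow> (nat \<Rightarrow> int) \<Rightarrow> nat set" where
  "touched (LoadC a c) m = {a}"
| "touched (Add a b c) m = {a, b, c}"
| "touched (Sub a b c) m = {a, b, c}"
| "touched (Mul a b c) m = {a, b, c}"
| "touched (LoadI a b) m = {a, b, nat (m b)}"
| "touched (StoreI a b) m = {a, b, nat (m a)}"
| "touched (JumpPos a l) m = {a}"
| "touched (Jump l) m = {}"
| "touched Halt m = {}"

definition halted :: "instr list \<Rightarrow> conf \<Rightarrow> bool" where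
  "halted prog c \<longleftrightarrow> fst c \<ge> length prog \<or> prog ! fst c = Halt"

definition step :: "instr list \<Rightarrow> conf \<Rightarrow> conf" where
  "step prog c = (if halted prog c then c else exec (prog ! fst c) c)"

definition run :: "instr list \<Rightarrow> conf \<Rightarrow> nat \<Rightarrow> conf" where
  "run prog c t = (step prog ^^ t) c"

definition used_cells :: "instr list \<Rightarrow> conf \<Rightarrow> nat \<Rightarrow> nat set" where
  "used_cells prog c t =
     (\<Union>i<t. (let ci = run prog c i in
               if halted prog ci then {} else touched (prog ! fst ci) (snd ci)))"

definition init :: "nat \<Rightarrow> nat \<Rightarrow> conf" where
  "init n m = (0, (\<lambda>_. 0)(0 := int n, 1 := int m))"

end

theory Submission
  imports Defs
begin

text \<open>Reading bits from the most significant one, \<open>\<psi>\<close> orders vectors of equal length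
  lexicographically, so the vector of rank \<open>m\<close> can be found greedily: its first bit is
  0 exactly when at least \<open>m\<close> admissible vectors start with 0, and one continues with the
  remaining rank. Whether a prefix can be extended, and in how many ways, depends only on its last
  \<open>\<beta> - 1\<close> bits; with \<open>\<beta>\<close> fixed these form a finite automaton with \<open>Q = 2 ^ (\<beta> - 1)\<close> live
  states, and the number \<open>count L s\<close> of completions of length \<open>L\<close> from state \<open>s\<close> obeys a
  two-term recursion. Tabulating \<open>count\<close> for all \<open>L \<le> n\<close> takes \<open>O(n)\<close> cells and steps,
  after which each output bit costs \<open>O(1)\<close> steps. A concrete program for the unit-cost machine
  implements this; its space is bounded by its time because an instruction touches at most three
  cells.\<close>

section \<open>Binary words and window weights\<close>

lemma psi_Nil [simp]: "psi [] = 0"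
  by (simp add: psi_def)

lemma psi_Cons: "psi (b # w) = (if b then 2 ^ length w else 0) + psi w"
proof -
  have shift: "\<And>n i. Suc n - 1 - Suc i = n - 1 - i"
    by simp
  show ?thesis
    unfolding psi_def length_Cons sum.lessThan_Suc_shift shift by simp
qed

lemma psi_less_power: "psi w < 2 ^ length w"
  by (induction w) (auto simp: psi_Cons)

lemma psi_snoc: "psi (w @ [b]) = 2 * psi w + (if b then 1 else 0)"
  by (induction w) (auto simp: psi_Cons)

lemma psi_Cons_le_Cons_iff:
  assumes "length w = length v"
  shows "psi (a # w) \<le> psi (b # v) \<longleftrightarrow> (\<not> a \<and> b) \<or> (a = b \<and> psi w \<le> psi v)"
  using psi_less_power[of w] psi_less_power[of v] assms by (auto simp: psi_Cons)

definition weight :: "bool list \<Rightarrow> nat" where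
  "weight xs = length (filter id xs)"

definition take_last :: "nat \<Rightarrow> 'a list \<Rightarrow> 'a list" where
  "take_last k xs = drop (length xs - k) xs"

fun low_weight :: "nat \<Rightarrow> nat \<Rightarrow> nat" where
  "low_weight x 0 = 0"
| "low_weight x (Suc k) = x mod 2 + low_weight (x div 2) k"

lemma weight_append [simp]: "weight (xs @ ys) = weight xs + weight ys"
  by (simp add: weight_def)

lemma weight_drop_antimono: "j \<le> i \<Longrightarrow> weight (drop i xs) \<le> weight (drop j xs)"
  by (metis append_take_drop_id drop_drop le_add2 le_add_diff_inverse2 weight_append)

lemma take_last_snoc: "take_last (Suc k) (xs @ [c]) = take_last k xs @ [c]"
  by (simp add: take_last_def)

lemma low_weight_mod_power: "low_weight (x mod 2 ^ k) k = low_weight x k"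
proof (induction k arbitrary: x)
  case (Suc k)
  have "x mod 2 ^ Suc k div 2 = x div 2 mod 2 ^ k"
    by (simp add: mod_mult2_eq)
  then show ?case using Suc by (simp add: mod_mod_cancel)
qed simp

lemma weight_take_last: "weight (take_last k w) = low_weight (psi w) k"
proof (induction w arbitrary: k rule: rev_induct)
  case Nil
  have "low_weight 0 k = 0" for k by (induction k) auto
  then show ?case by (simp add: take_last_def weight_def)
next
  case (snoc b w)
  then show ?case
    by (cases k) (simp_all add: take_last_def weight_def take_last_snoc psi_snoc)
qed

lemma wwl_iff_weight: "wwl \<beta> p xs \<longleftrightarrow> (\<forall>i<length xs. weight (take \<beta> (drop i xs)) \<le> p)"
  by (simp add: wwl_def weight_def)

lemma wwl_appendD: "wwl \<beta> p (xs @ ys) \<Longrightarrow> wwl \<beta> p xs"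
  unfolding wwl_iff_weight
proof (intro allI impI)
  fix i assume ok: "\<forall>i<length (xs @ ys). weight (take \<beta> (drop i (xs @ ys))) \<le> p"
    and i: "i < length xs"
  show "weight (take \<beta> (drop i xs)) \<le> p"
    using ok[rule_format, of i] i by simp
qed

lemma wwl_snoc_iff:
  assumes "\<beta> > 0"
  shows "wwl \<beta> p (xs @ [c]) \<longleftrightarrow> wwl \<beta> p xs \<and> weight (take_last \<beta> (xs @ [c])) \<le> p"
proof
  assume ok: "wwl \<beta> p (xs @ [c])"
  have "take \<beta> (drop (length xs + 1 - \<beta>) (xs @ [c])) = take_last \<beta> (xs @ [c])"
    by (simp add: take_last_def)
  moreover have "length xs + 1 - \<beta> < length (xs @ [c])"
    using assms by simp
  ultimately show "wwl \<beta> p xs \<and> weight (take_last \<beta> (xs @ [c])) \<le> p"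
    using ok wwl_appendD[OF ok] unfolding wwl_iff_weight by metis
next
  assume ok: "wwl \<beta> p xs \<and> weight (take_last \<beta> (xs @ [c])) \<le> p"
  show "wwl \<beta> p (xs @ [c])"
    unfolding wwl_iff_weight
  proof (intro allI impI)
    fix i assume i: "i < length (xs @ [c])"
    show "weight (take \<beta> (drop i (xs @ [c]))) \<le> p"
    proof (cases "i + \<beta> \<le> length xs")
      case True
      then show ?thesis using ok assms unfolding wwl_iff_weight by simp
    next
      case False
      then have "take \<beta> (drop i (xs @ [c])) = drop i (xs @ [c])"
        by simp
      moreover have "weight (drop i (xs @ [c])) \<le> weight (take_last \<beta> (xs @ [c]))"
        unfolding take_last_def using False by (intro weight_drop_antimono) simp
      ultimately show ?thesis using ok by simp
    qed
  qed
qed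

lemma wwl_Nil: "wwl \<beta> p []"
  by (simp add: wwl_def)

section \<open>Counting completions\<close>

locale wwl_automaton =
  fixes \<beta> p :: nat
  assumes window_pos: "\<beta> > 0"
begin

text \<open>A prefix is summarised by its last \<open>\<beta> - 1\<close> bits, read as a number below \<open>Q\<close>;
  the extra state \<open>Q\<close> is the dead state reached by appending a forbidden one.\<close>

definition Q :: nat where
  "Q = 2 ^ (\<beta> - 1)"

definition state :: "bool list \<Rightarrow> nat" where
  "state h = psi h mod Q"

definition succ0 :: "nat \<Rightarrow> nat" where
  "succ0 s = 2 * s mod Q"

definition succ1 :: "nat \<Rightarrow> nat" where
  "succ1 s = (if low_weight s (\<beta> - 1) < p then (2 * s + 1) mod Q else Q)"

fun count :: "nat \<Rightarrow> nat \<Rightarrow> nat" where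
  "count 0 s = (if s < Q then 1 else 0)"
| "count (Suc L) s = (if s < Q then count L (succ0 s) + count L (succ1 s) else 0)"

fun unrank :: "nat \<Rightarrow> nat \<Rightarrow> nat \<Rightarrow> bool list" where
  "unrank s 0 m = []"
| "unrank s (Suc L) m =
     (if m \<le> count L (succ0 s) then False # unrank (succ0 s) L m
      else True # unrank (succ1 s) L (m - count L (succ0 s)))"

definition completions :: "bool list \<Rightarrow> nat \<Rightarrow> bool list set" where
  "completions h L = {w. length w = L \<and> wwl \<beta> p (h @ w)}"

lemma Q_pos: "Q > 0"
  by (simp add: Q_def)

lemma state_less: "state h < Q"
  using Q_pos by (simp add: state_def)

lemma succ0_less: "succ0 s < Q"
  using Q_pos by (simp add: succ0_def)

lemma succ1_le: "succ1 s \<le> Q"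
  using Q_pos by (simp add: succ1_def)

lemma count_dead [simp]: "count L Q = 0"
  by (cases L) auto

lemma length_unrank [simp]: "length (unrank s L m) = L"
  by (induction s L m rule: unrank.induct) auto

lemma state_Nil: "state [] = 0"
  by (simp add: state_def)

lemma state_snoc: "state (h @ [c]) = (2 * state h + (if c then 1 else 0)) mod Q"
proof -
  have "(2 * x + y) mod Q = (2 * (x mod Q) + y) mod Q" for x y :: nat
    by (metis mod_add_left_eq mod_mult_right_eq)
  then show ?thesis by (simp add: state_def psi_snoc)
qed

lemma wwl_snoc_False: "wwl \<beta> p h \<Longrightarrow> wwl \<beta> p (h @ [False])"
proof -
  assume ok: "wwl \<beta> p h"
  obtain k where k: "\<beta> = Suc k" using window_pos by (cases \<beta>) auto
  have "weight (take_last k h) \<le> p"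
  proof (cases "h = []")
    case True then show ?thesis by (simp add: take_last_def weight_def)
  next
    case False
    have "length h - \<beta> < length h" using False window_pos by simp
    then have "weight (take \<beta> (drop (length h - \<beta>) h)) \<le> p"
      using ok unfolding wwl_iff_weight by blast
    moreover have "weight (take_last k h) \<le> weight (drop (length h - \<beta>) h)"
      unfolding take_last_def by (rule weight_drop_antimono) (simp add: k)
    ultimately show ?thesis by simp
  qed
  then show ?thesis
    using ok window_pos by (simp add: wwl_snoc_iff k take_last_snoc weight_def)
qed

lemma wwl_snoc_True_iff:
  "wwl \<beta> p h \<Longrightarrow> wwl \<beta> p (h @ [True]) \<longleftrightarrow> low_weight (state h) (\<beta> - 1) < p"
proof -
  assume ok: "wwl \<beta> p h"
  obtain k where k: "\<beta> = Suc k" using window_pos by (cases \<beta>) auto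
  have "low_weight (state h) (\<beta> - 1) = low_weight (psi h) (\<beta> - 1)"
    by (simp add: state_def Q_def low_weight_mod_power)
  then have "low_weight (state h) (\<beta> - 1) = weight (take_last k h)"
    by (simp add: weight_take_last k)
  then show ?thesis
    using ok window_pos by (simp add: wwl_snoc_iff k take_last_snoc weight_def Suc_le_eq)
qed

lemma state_snoc_False: "state (h @ [False]) = succ0 (state h)"
  by (simp add: state_snoc succ0_def)

lemma state_snoc_True:
  "wwl \<beta> p h \<Longrightarrow> wwl \<beta> p (h @ [True]) \<Longrightarrow> state (h @ [True]) = succ1 (state h)"
  using wwl_snoc_True_iff by (simp add: state_snoc succ1_def)

lemma completions_dead: "\<not> wwl \<beta> p h \<Longrightarrow> completions h L = {}"
  by (auto simp: completions_def dest: wwl_appendD)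

lemma completions_0: "wwl \<beta> p h \<Longrightarrow> completions h 0 = {[]}"
  by (auto simp: completions_def)

lemma finite_completions: "finite (completions h L)"
proof (rule finite_subset)
  show "completions h L \<subseteq> {w. set w \<subseteq> UNIV \<and> length w = L}"
    by (auto simp: completions_def)
qed (use finite_lists_length_eq[of "UNIV :: bool set"] in auto)

lemma completions_Suc:
  "completions h (Suc L) =
     Cons False ` completions (h @ [False]) L \<union> Cons True ` completions (h @ [True]) L"
proof
  show "completions h (Suc L) \<subseteq>
      Cons False ` completions (h @ [False]) L \<union> Cons True ` completions (h @ [True]) L"
  proof
    fix w assume "w \<in> completions h (Suc L)"
    then obtain c w' where "w = c # w'" "length w' = L" "wwl \<beta> p ((h @ [c]) @ w')"
      by (cases w) (auto simp: completions_def)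
    then show "w \<in>
        Cons False ` completions (h @ [False]) L \<union> Cons True ` completions (h @ [True]) L"
      by (cases c) (auto simp: completions_def)
  qed
qed (auto simp: completions_def)

lemma card_completions_Suc:
  "card (completions h (Suc L)) =
     card (completions (h @ [False]) L) + card (completions (h @ [True]) L)"
  unfolding completions_Suc
  by (subst card_Un_disjoint) (auto simp: finite_completions card_image)

lemma card_completions: "wwl \<beta> p h \<Longrightarrow> card (completions h L) = count L (state h)"
proof (induction L arbitrary: h)
  case 0
  then show ?case by (simp add: completions_0 state_less)
next
  case (Suc L)
  have "card (completions (h @ [True]) L) = count L (succ1 (state h))"
    using Suc.IH Suc.prems wwl_snoc_True_iff[OF Suc.prems]
    by (cases "wwl \<beta> p (h @ [True])") (simp_all add: completions_dead state_snoc_True succ1_def)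
  then show ?case
    using Suc.IH[OF wwl_snoc_False[OF Suc.prems]] state_less[of h]
    by (simp add: card_completions_Suc state_snoc_False)
qed

lemma unrank_correct:
  assumes "wwl \<beta> p h" "1 \<le> m" "m \<le> card (completions h L)"
  shows "unrank (state h) L m \<in> completions h L
    \<and> card {w \<in> completions h L. psi w \<le> psi (unrank (state h) L m)} = m"
  using assms
proof (induction L arbitrary: h m)
  case 0
  moreover have "{w. w = [] \<and> psi w = 0} = {[]}" by auto
  ultimately show ?case by (simp add: completions_0)
next
  case (Suc L)
  let ?v = "count L (succ0 (state h))"
  have ok0: "wwl \<beta> p (h @ [False])"
    using wwl_snoc_False[OF Suc.prems(1)] .
  have card0: "card (completions (h @ [False]) L) = ?v"
    using card_completions[OF ok0] by (simp add: state_snoc_False)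
  have m_le: "m \<le> card (completions (h @ [False]) L) + card (completions (h @ [True]) L)"
    using Suc.prems(3) card_completions_Suc by simp
  have len: "\<And>w h'. w \<in> completions h' L \<Longrightarrow> length w = L"
    by (simp add: completions_def)
  show ?case
  proof (cases "m \<le> ?v")
    case True
    define d where "d = unrank (succ0 (state h)) L m"
    have IH: "d \<in> completions (h @ [False]) L"
      "card {w \<in> completions (h @ [False]) L. psi w \<le> psi d} = m"
      using Suc.IH[OF ok0 Suc.prems(2)] True card0 by (simp_all add: d_def state_snoc_False)
    have "{w \<in> completions h (Suc L). psi w \<le> psi (False # d)}
        = Cons False ` {w \<in> completions (h @ [False]) L. psi w \<le> psi d}"
      unfolding completions_Suc using IH(1) len by (auto simp: psi_Cons_le_Cons_iff)
    then show ?thesis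
      using IH True by (simp add: d_def card_image completions_Suc)
  next
    case False
    let ?m = "m - ?v"
    have "card (completions (h @ [True]) L) > 0"
      using False m_le card0 by simp
    then have ok1: "wwl \<beta> p (h @ [True])"
      using completions_dead by fastforce
    define d where "d = unrank (succ1 (state h)) L ?m"
    have IH: "d \<in> completions (h @ [True]) L"
      "card {w \<in> completions (h @ [True]) L. psi w \<le> psi d} = ?m"
      using Suc.IH[OF ok1, of ?m] False m_le card0
      by (simp_all add: d_def state_snoc_True[OF Suc.prems(1) ok1])
    have below: "{w \<in> completions h (Suc L). psi w \<le> psi (True # d)}
        = Cons False ` completions (h @ [False]) L
          \<union> Cons True ` {w \<in> completions (h @ [True]) L. psi w \<le> psi d}"
      unfolding completions_Suc using IH(1) len by (auto simp: psi_Cons_le_Cons_iff)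
    have "card {w \<in> completions h (Suc L). psi w \<le> psi (True # d)}
        = card (completions (h @ [False]) L) + ?m"
      unfolding below using IH(2) by (subst card_Un_disjoint) (auto simp: finite_completions card_image)
    then show ?thesis
      using IH False card0 by (simp add: d_def completions_Suc)
  qed
qed

lemma greedy_step_in_range:
  assumes "s < Q" "1 \<le> r" "r \<le> count (Suc L) s"
  defines "v \<equiv> count L (succ0 s)"
  shows "(if r \<le> v then succ0 s else succ1 s) < Q" "1 \<le> (if r \<le> v then r else r - v)"
    "(if r \<le> v then r else r - v) \<le> count L (if r \<le> v then succ0 s else succ1 s)"
proof -
  have "r \<le> v + count L (succ1 s)"
    using assms by simp
  then have "\<not> r \<le> v \<Longrightarrow> succ1 s \<noteq> Q"
    by auto
  then show "(if r \<le> v then succ0 s else succ1 s) < Q"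
    using succ0_less[of s] succ1_le[of s] by (auto simp: le_less)
  show "1 \<le> (if r \<le> v then r else r - v)"
    "(if r \<le> v then r else r - v) \<le> count L (if r \<le> v then succ0 s else succ1 s)"
    using assms(2) \<open>r \<le> v + count L (succ1 s)\<close> by (auto simp: v_def)
qed

lemma completions_Nil: "completions [] n = WWL n \<beta> p"
  by (simp add: completions_def WWL_def)

lemma card_WWL: "card (WWL n \<beta> p) = count n 0"
  using card_completions[OF wwl_Nil, of n] by (simp add: completions_Nil state_Nil)

lemma ord_in_unrank:
  assumes "1 \<le> m" "m \<le> card (WWL n \<beta> p)"
  shows "unrank 0 n m \<in> WWL n \<beta> p \<and> ord_in (WWL n \<beta> p) (unrank 0 n m) = m"
  using unrank_correct[OF wwl_Nil assms(1), of n] assms(2)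
  by (simp add: completions_Nil state_Nil ord_in_def)

end

section \<open>Running programs\<close>

lemma run_0 [simp]: "run prog c 0 = c"
  by (simp add: run_def)

lemma run_add: "run prog c (a + b) = run prog (run prog c a) b"
  by (simp only: run_def add.commute[of a b] funpow_add o_apply)

lemma run_step:
  "pc < length prog \<Longrightarrow> prog ! pc \<noteq> Halt \<Longrightarrow>
   run prog (pc, m) (Suc t) = run prog (exec (prog ! pc) (pc, m)) t"
  unfolding run_def funpow_Suc_right o_apply by (simp add: step_def halted_def)

lemma run_step_numeral:
  "pc < length prog \<Longrightarrow> prog ! pc \<noteq> Halt \<Longrightarrow>
   run prog (pc, m) (numeral k) = run prog (exec (prog ! pc) (pc, m)) (pred_numeral k)"
  by (simp add: numeral_eq_Suc run_step)

lemma card_touched_le: "card (touched i m) \<le> 3"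
  by (cases i) (auto simp: card_insert_if)

lemma card_used_cells_le: "card (used_cells prog c t) \<le> 3 * t"
proof -
  have "card (used_cells prog c t) \<le> (\<Sum>i<t. card (let ci = run prog c i in
          if halted prog ci then {} else touched (prog ! fst ci) (snd ci)))"
    unfolding used_cells_def by (rule card_UN_le) simp
  also have "\<dots> \<le> (\<Sum>i<t. 3)"
    by (intro sum_mono) (simp add: Let_def card_touched_le)
  finally show ?thesis by simp
qed

lemma run_iterate:
  assumes step: "\<And>j m. j < N \<Longrightarrow> I j m \<Longrightarrow>
      \<exists>t m'. t \<le> T \<and> run prog (pc j, m) t = (pc (Suc j), m') \<and> I (Suc j) m'"
    and "j \<le> N" "I j m"
  shows "\<exists>t m'. t \<le> T * (N - j) \<and> run prog (pc j, m) t = (pc N, m') \<and> I N m'"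
  using assms(2,3)
proof (induction "N - j" arbitrary: j m)
  case 0
  then show ?case by (intro exI[of _ 0]) auto
next
  case (Suc d)
  then have j: "j < N" by simp
  obtain t1 m1 where 1: "t1 \<le> T" "run prog (pc j, m) t1 = (pc (Suc j), m1)" "I (Suc j) m1"
    using step[OF j Suc.prems(2)] by blast
  have "d = N - Suc j" "Suc j \<le> N" using Suc.hyps(2) by simp_all
  then obtain t2 m2 where 2: "t2 \<le> T * (N - Suc j)" "run prog (pc (Suc j), m1) t2 = (pc N, m2)" "I N m2"
    using Suc.hyps(1) 1(3) by blast
  have "N - j = Suc (N - Suc j)"
    using j by simp
  then have "T * (N - j) = T + T * (N - Suc j)"
    by simp
  then have "t1 + t2 \<le> T * (N - j)"
    using 1(1) 2(1) by linarith
  moreover have "run prog (pc j, m) (t1 + t2) = (pc N, m2)"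
    using 1(2) 2(2) by (simp add: run_add)
  ultimately show ?case using 2(3) by blast
qed

lemma nat_of_nat_plus_1: "nat (int x + 1) = x + 1"
  by simp

lemma of_nat_plus_1: "int x + 1 = int (x + 1)"
  by simp

lemma of_nat_add_double: "2 * int s + int x = int (x + 2 * s)"
  by simp

lemma nth_concat_const_length:
  assumes "\<forall>x\<in>set xs. length (f x) = k" "j < length xs" "i < k"
  shows "concat (map f xs) ! (k * j + i) = f (xs ! j) ! i"
  using assms
proof (induction xs arbitrary: j)
  case (Cons x xs)
  then show ?case
    by (cases j) (simp_all add: nth_append)
qed simp

section \<open>The ranking program\<close>

context wwl_automaton
begin

text \<open>Memory layout for input length \<open>n\<close>: cell 0 holds \<open>n\<close>, cell 1 the rank still to be
  decoded, cells 2, 3, 11, 12, 13 the constants \<open>1\<close>, \<open>0\<close>, \<open>Q + 1\<close>, \<open>n + 39\<close>, \<open>n + 20\<close>;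
  cell 14 holds the current state and the other cells below 20 are scratch registers.
  The transition table starts at \<open>n + 39\<close>, followed by the rows of the counting table, row \<open>L\<close>
  holding \<open>count L s\<close> for \<open>s \<le> Q\<close> (the entry for the dead state is never written and stays 0).
  The code at 0--7 sets up the registers and jumps to 110, where unrolled code writes the
  transition table and jumps back; 8--18 fill row 0, 19--37 the rows \<open>1, \<dots>, n\<close>; 38--68 decode
  greedily, most significant bit first; 69--108 copy the buffered first bits into place.\<close>

definition main :: "instr list" where
  "main =
    [LoadC 2 1, LoadC 11 (int Q + 1), LoadC 4 20, Add 13 0 4, LoadC 4 19, Add 12 13 4,
       Add 6 12 3, Jump 110,
     Add 7 6 3, Add 9 6 3, LoadC 8 (int Q),
     StoreI 7 2, Add 7 7 2, Sub 8 8 2, JumpPos 8 11,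
     Add 7 7 2, Add 10 0 3,
     JumpPos 10 19, Jump 38,
     LoadC 8 (int Q), Add 6 12 3,
     LoadI 4 6, Add 4 9 4, LoadI 4 4, Add 6 6 2, LoadI 5 6, Add 5 9 5,
       LoadI 5 5, Add 6 6 2, Add 4 4 5, StoreI 7 4, Add 7 7 2, Sub 8 8 2,
       JumpPos 8 21,
     Add 9 9 11, Add 7 7 2, Sub 10 10 2, JumpPos 10 19,
     Sub 9 9 11, LoadC 15 19, Add 7 3 2, Sub 19 13 2, Add 10 0 3,
     JumpPos 10 45, Jump 69,
     Add 6 12 14, Add 6 6 14, LoadI 4 6, Add 4 9 4, LoadI 4 4, Sub 16 1 4,
       JumpPos 16 55, LoadI 14 6, LoadC 17 0, Jump 59,
     Add 1 16 3, Add 6 6 2, LoadI 14 6, LoadC 17 1,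
     Add 18 7 3, JumpPos 15 62, Jump 63,
     Add 18 18 19,
     StoreI 18 17, Add 7 7 2, Sub 15 15 2, Sub 9 9 11, Sub 10 10 2, JumpPos 10 45,
     Add 0 13 3, LoadC 4 18, Add 1 13 4, LoadC 2 1,
     LoadI 19 1, Sub 1 1 2, LoadI 18 1, Sub 1 1 2, LoadI 17 1, Sub 1 1 2,
       LoadI 16 1, Sub 1 1 2, LoadI 15 1, Sub 1 1 2, LoadI 14 1, Sub 1 1 2,
       LoadI 13 1, Sub 1 1 2, LoadI 12 1, Sub 1 1 2, LoadI 11 1, Sub 1 1 2,
       LoadI 10 1, Sub 1 1 2, LoadI 9 1, Sub 1 1 2, LoadI 8 1, Sub 1 1 2,
       LoadI 7 1, Sub 1 1 2, LoadI 6 1, Sub 1 1 2, LoadI 5 1, Sub 1 1 2,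
       LoadI 4 1, Sub 1 1 2, LoadI 3 1, Sub 1 1 2, LoadI 2 1, LoadI 1 0,
     Halt]"

definition table_block :: "nat \<Rightarrow> instr list" where
  "table_block s = [LoadC 4 (int (succ0 s)), StoreI 6 4, Add 6 6 2,
                    LoadC 4 (int (succ1 s)), StoreI 6 4, Add 6 6 2]"

definition prog :: "instr list" where
  "prog = main @ concat (map table_block [0..<Q]) @ [Jump 8]"

lemma length_main: "length main = 110"
  by (simp add: main_def)

lemma length_table: "length (concat (map table_block [0..<Q])) = 6 * Q"
proof -
  have "length \<circ> table_block = (\<lambda>_. 6)"
    by (simp add: fun_eq_iff table_block_def)
  then show ?thesis by (simp add: length_concat sum_list_triv)
qed

lemma length_prog: "length prog = 111 + 6 * Q"
  by (simp add: prog_def length_main length_table)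

lemma prog_nth_main: "i < 110 \<Longrightarrow> prog ! i = main ! i"
  by (simp add: prog_def nth_append length_main)

lemma prog_nth_table_block:
  assumes "s < Q" "i < 6"
  shows "prog ! (110 + (6 * s + i)) = table_block s ! i"
proof -
  have "6 * s + i < 6 * Q" using assms by linarith
  then have "prog ! (110 + (6 * s + i)) = concat (map table_block [0..<Q]) ! (6 * s + i)"
    by (simp add: prog_def nth_append length_main length_table)
  also have "\<dots> = table_block s ! i"
    using assms by (subst nth_concat_const_length) (auto simp: table_block_def)
  finally show ?thesis .
qed

lemma prog_nth_table_end: "prog ! (110 + 6 * Q) = Jump 8"
  by (simp add: prog_def nth_append length_main length_table)

text \<open>Symbolic execution works best with \<open>of_nat_add\<close>, \<open>of_nat_mult\<close> and \<open>of_nat_diff\<close>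
  removed from the simpset: addresses computed by the program then stay of the form \<open>int a\<close>
  and match the intended natural-number addresses syntactically.\<close>

lemmas exec_main =
  nat_of_nat_plus_1 of_nat_plus_1 run_step_numeral run_step length_prog prog_nth_main main_def

abbreviation trans_addr :: "nat \<Rightarrow> nat \<Rightarrow> nat" where
  "trans_addr n s \<equiv> n + 39 + 2 * s"

abbreviation count_addr :: "nat \<Rightarrow> nat \<Rightarrow> nat \<Rightarrow> nat" where
  "count_addr n L s \<equiv> n + 39 + 2 * Q + L * (Q + 1) + s"

definition prepared :: "nat \<Rightarrow> nat \<Rightarrow> (nat \<Rightarrow> int) \<Rightarrow> bool" where
  "prepared n r m \<longleftrightarrow> m 0 = int n \<and> m 1 = int r \<and> m 2 = 1 \<and> m 3 = 0 \<and> m 11 = int Q + 1 \<and>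
     m 12 = int (n + 39) \<and> m 13 = int (n + 20) \<and>
     (\<forall>s<Q. m (trans_addr n s) = int (succ0 s) \<and> m (trans_addr n s + 1) = int (succ1 s))"

lemma prepared_cong:
  assumes "prepared n r m" "m' 1 = int r'"
    and "\<And>a. a \<in> {0, 2, 3, 11, 12, 13} \<or> trans_addr n 0 \<le> a \<and> a < trans_addr n Q \<Longrightarrow> m' a = m a"
  shows "prepared n r' m'"
proof -
  have "m' (trans_addr n s) = m (trans_addr n s) \<and> m' (trans_addr n s + 1) = m (trans_addr n s + 1)"
    if "s < Q" for s
    using assms(3)[of "trans_addr n s"] assms(3)[of "trans_addr n s + 1"] that by simp
  then show ?thesis
    using assms unfolding prepared_def by simp
qed

lemma prog_nth_table_block_cases:
  assumes "s < Q"
  shows "prog ! (110 + 6 * s) = LoadC 4 (int (succ0 s))" "prog ! (111 + 6 * s) = StoreI 6 4"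
    "prog ! (112 + 6 * s) = Add 6 6 2" "prog ! (113 + 6 * s) = LoadC 4 (int (succ1 s))"
    "prog ! (114 + 6 * s) = StoreI 6 4" "prog ! (115 + 6 * s) = Add 6 6 2"
  using prog_nth_table_block[OF assms, of 0] prog_nth_table_block[OF assms, of 1]
    prog_nth_table_block[OF assms, of 2] prog_nth_table_block[OF assms, of 3]
    prog_nth_table_block[OF assms, of 4] prog_nth_table_block[OF assms, of 5]
  by (simp_all add: table_block_def add.assoc[symmetric])

lemma run_table_block:
  assumes "s < Q" "m 2 = 1" "m 6 = int (trans_addr n s)"
  shows "\<exists>m'. run prog (110 + 6 * s, m) 6 = (110 + 6 * Suc s, m') \<and> m' 2 = 1 \<and>
     m' 6 = int (trans_addr n (Suc s)) \<and>
     m' (trans_addr n s) = int (succ0 s) \<and> m' (trans_addr n s + 1) = int (succ1 s) \<and>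
     (\<forall>a. a \<notin> {4, 6, trans_addr n s, trans_addr n s + 1} \<longrightarrow> m' a = m a)"
  using assms by (simp add: nat_of_nat_plus_1 run_step_numeral run_step length_prog prog_nth_table_block_cases
      del: of_nat_add of_nat_mult)

lemma run_table:
  assumes "m0 2 = 1" "m0 6 = int (trans_addr n 0)"
  shows "\<exists>t m. t \<le> 6 * Q \<and> run prog (110, m0) t = (110 + 6 * Q, m) \<and> m 2 = 1 \<and>
     m 6 = int (trans_addr n Q) \<and>
     (\<forall>s<Q. m (trans_addr n s) = int (succ0 s) \<and> m (trans_addr n s + 1) = int (succ1 s)) \<and>
     (\<forall>a. a \<notin> {4, 6} \<and> \<not> (trans_addr n 0 \<le> a \<and> a < trans_addr n Q) \<longrightarrow> m a = m0 a)"
proof -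
  define I where "I s m \<longleftrightarrow> m 2 = 1 \<and> m 6 = int (trans_addr n s) \<and>
     (\<forall>t<s. m (trans_addr n t) = int (succ0 t) \<and> m (trans_addr n t + 1) = int (succ1 t)) \<and>
     (\<forall>a. a \<notin> {4, 6} \<and> \<not> (trans_addr n 0 \<le> a \<and> a < trans_addr n s) \<longrightarrow> m a = m0 a)"
    for s m
  have "\<exists>t m'. t \<le> 6 \<and> run prog (110 + 6 * s, m) t = (110 + 6 * Suc s, m') \<and> I (Suc s) m'"
    if "s < Q" "I s m" for s m
  proof -
    obtain m' where m': "run prog (110 + 6 * s, m) 6 = (110 + 6 * Suc s, m')" "m' 2 = 1"
      "m' 6 = int (trans_addr n (Suc s))"
      "m' (trans_addr n s) = int (succ0 s)" "m' (trans_addr n s + 1) = int (succ1 s)"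
      "\<forall>a. a \<notin> {4, 6, trans_addr n s, trans_addr n s + 1} \<longrightarrow> m' a = m a"
      using run_table_block[OF \<open>s < Q\<close>] \<open>I s m\<close> unfolding I_def by blast
    have "I (Suc s) m'"
      using m' \<open>I s m\<close> unfolding I_def by (auto simp: less_Suc_eq)
    then show ?thesis using m'(1) by blast
  qed
  from run_iterate[of Q I 6 prog "\<lambda>s. 110 + 6 * s", OF this, of 0 m0]
  show ?thesis using assms by (auto simp: I_def)
qed

lemma run_setup:
  "\<exists>t m. t \<le> 9 + 6 * Q \<and> run prog (init n r) t = (8, m) \<and> prepared n r m \<and>
     m 6 = int (count_addr n 0 0) \<and> m 14 = 0 \<and> (\<forall>a \<ge> count_addr n 0 0. m a = 0)"
proof -
  define m1 :: "nat \<Rightarrow> int" where "m1 = (\<lambda>_. 0)(0 := int n, 1 := int r, 2 := 1,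
    11 := int Q + 1, 4 := 19, 13 := int (n + 20), 12 := int (n + 39), 6 := int (n + 39))"
  have start: "run prog (init n r) 8 = (110, m1)"
    unfolding init_def m1_def by (simp add: exec_main fun_eq_iff)
  obtain t m2 where m2: "t \<le> 6 * Q" "run prog (110, m1) t = (110 + 6 * Q, m2)" "m2 2 = 1"
    "m2 6 = int (trans_addr n Q)"
    "\<forall>s<Q. m2 (trans_addr n s) = int (succ0 s) \<and> m2 (trans_addr n s + 1) = int (succ1 s)"
    "\<forall>a. a \<notin> {4, 6} \<and> \<not> (trans_addr n 0 \<le> a \<and> a < trans_addr n Q) \<longrightarrow> m2 a = m1 a"
    using run_table[of m1 n] by (auto simp: m1_def)
  have jump_back: "run prog (110 + 6 * Q, m2) 1 = (8, m2)"
    by (simp add: run_step length_prog prog_nth_table_end)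
  have "run prog (init n r) (8 + (t + 1)) = (8, m2)"
    using start m2(2) jump_back by (simp only: run_add)
  moreover have "m2 a = m1 a" if "a < 20" "a \<noteq> 4" "a \<noteq> 6" for a
    using m2(6) that by auto
  ultimately show ?thesis
    using m2 by (intro exI[of _ "8 + (t + 1)"] exI[of _ m2]) (auto simp: prepared_def m1_def)
qed

definition counted :: "nat \<Rightarrow> nat \<Rightarrow> nat \<Rightarrow> (nat \<Rightarrow> int) \<Rightarrow> bool" where
  "counted n r L m \<longleftrightarrow> prepared n r m \<and> m 9 = int (count_addr n L 0) \<and>
     m 7 = int (count_addr n (Suc L) 0) \<and> m 10 = int (n - L) \<and> m 14 = 0 \<and>
     (\<forall>L' s. L' \<le> L \<and> s \<le> Q \<longrightarrow> m (count_addr n L' s) = int (count L' s)) \<and>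
     (\<forall>a \<ge> count_addr n L Q. m a = 0)"

lemma run_row0_cell:
  assumes "j < Q" "m 2 = 1" "m 7 = int (count_addr n 0 j)" "m 8 = int (Q - j)"
  shows "run prog (11, m) 4 = (if Suc j < Q then 11 else 15,
     m(count_addr n 0 j := 1, 7 := int (count_addr n 0 (Suc j)), 8 := int (Q - Suc j)))"
proof -
  have "(0 < int (Q - j) - 1) = (Suc j < Q)" "int (Q - j) - 1 = int (Q - Suc j)"
    using assms(1) by linarith+
  then show ?thesis
    using assms by (simp add: exec_main del: of_nat_add of_nat_mult of_nat_diff)
qed

lemma run_row0_cells:
  assumes "m0 2 = 1" "m0 7 = int (count_addr n 0 0)" "m0 8 = int Q"
  shows "\<exists>t m. t \<le> 4 * Q \<and> run prog (11, m0) t = (15, m) \<and> m 2 = 1 \<and>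
    m 7 = int (count_addr n 0 Q) \<and> (\<forall>s<Q. m (count_addr n 0 s) = 1) \<and>
    (\<forall>a. a \<notin> {7, 8} \<and> \<not> (count_addr n 0 0 \<le> a \<and> a < count_addr n 0 Q) \<longrightarrow> m a = m0 a)"
proof -
  define pc where "pc j = (if j < Q then 11 else 15 :: nat)" for j
  define I where "I j m \<longleftrightarrow> m 2 = 1 \<and> m 7 = int (count_addr n 0 j) \<and> m 8 = int (Q - j) \<and>
     (\<forall>s<j. m (count_addr n 0 s) = 1) \<and>
     (\<forall>a. a \<notin> {7, 8} \<and> \<not> (count_addr n 0 0 \<le> a \<and> a < count_addr n 0 j) \<longrightarrow> m a = m0 a)"
    for j m
  have "\<exists>t m'. t \<le> 4 \<and> run prog (pc j, m) t = (pc (Suc j), m') \<and> I (Suc j) m'"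
    if "j < Q" "I j m" for j m
  proof -
    have "run prog (pc j, m) 4 = (pc (Suc j), m(count_addr n 0 j := 1,
        7 := int (count_addr n 0 (Suc j)), 8 := int (Q - Suc j)))"
      using run_row0_cell[OF \<open>j < Q\<close>] \<open>j < Q\<close> \<open>I j m\<close> by (simp add: I_def pc_def)
    moreover have "I (Suc j) (m(count_addr n 0 j := 1,
        7 := int (count_addr n 0 (Suc j)), 8 := int (Q - Suc j)))"
      using \<open>I j m\<close> unfolding I_def by (auto simp: less_Suc_eq)
    ultimately show ?thesis by blast
  qed
  from run_iterate[of Q I 4 prog pc, OF this, of 0 m0]
  obtain t m where "t \<le> 4 * Q" "run prog (11, m0) t = (15, m)" "I Q m"
    using assms Q_pos by (auto simp: I_def pc_def)
  then show ?thesis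
    by (intro exI[of _ t] exI[of _ m]) (auto simp: I_def)
qed

lemma run_row0:
  assumes "prepared n r m" "m 6 = int (count_addr n 0 0)" "m 14 = 0"
    "\<forall>a \<ge> count_addr n 0 0. m a = 0"
  shows "\<exists>t m'. t \<le> 5 + 4 * Q \<and> run prog (8, m) t = (17, m') \<and> counted n r 0 m'"
proof -
  have regs: "m 0 = int n" "m 2 = 1" "m 3 = 0"
    using assms(1) by (simp_all add: prepared_def)
  define m1 where "m1 = m(7 := int (count_addr n 0 0), 9 := int (count_addr n 0 0), 8 := int Q)"
  have enter: "run prog (8, m) 3 = (11, m1)"
    unfolding m1_def using regs assms(2)
    by (simp add: exec_main del: of_nat_add of_nat_mult of_nat_diff)
  obtain t m2 where m2: "t \<le> 4 * Q" "run prog (11, m1) t = (15, m2)" "m2 2 = 1"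
    "m2 7 = int (count_addr n 0 Q)" "\<forall>s<Q. m2 (count_addr n 0 s) = 1"
    "\<forall>a. a \<notin> {7, 8} \<and> \<not> (count_addr n 0 0 \<le> a \<and> a < count_addr n 0 Q) \<longrightarrow> m2 a = m1 a"
    using run_row0_cells[of m1 n] regs by (auto simp: m1_def)
  define m3 where "m3 = m2(7 := int (count_addr n 1 0), 10 := int n)"
  have unchanged: "m3 a = m a" if "a \<notin> {7, 8, 9, 10}"
    "\<not> (count_addr n 0 0 \<le> a \<and> a < count_addr n 0 Q)" for a
    using m2(6) that by (simp add: m3_def m1_def)
  have "run prog (15, m2) 2 = (17, m3)"
    unfolding m3_def using m2(3,4) unchanged[of 0] unchanged[of 3] regs
    by (simp add: m3_def exec_main del: of_nat_add of_nat_mult of_nat_diff)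
  then have "run prog (8, m) (3 + (t + 2)) = (17, m3)"
    using enter m2(2) by (simp only: run_add)
  moreover have "counted n r 0 m3"
    unfolding counted_def
  proof (intro conjI allI impI)
    show "prepared n r m3"
      using assms(1) by (rule prepared_cong) (use unchanged assms(1) in \<open>auto simp: prepared_def\<close>)
    fix L' s :: nat assume "L' \<le> 0 \<and> s \<le> Q"
    then show "m3 (count_addr n L' s) = int (count L' s)"
      using m2(5) unchanged[of "count_addr n 0 Q"] assms(4)
      by (cases "s = Q") (auto simp: m3_def)
  next
    fix a assume "count_addr n 0 Q \<le> a"
    then show "m3 a = 0"
      using unchanged assms(4) by simp
  qed (use unchanged[of 14] assms(3) m2(6) in \<open>auto simp: m3_def m1_def\<close>)
  ultimately show ?thesis
    using m2(1) by (intro exI[of _ "3 + (t + 2)"]) auto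
qed

lemma run_count_cell:
  assumes "s < Q" "m 2 = 1" "m 6 = int (trans_addr n s)" "m 7 = int (count_addr n (Suc L) s)"
    "m 8 = int (Q - s)" "m 9 = int (count_addr n L 0)"
    "m (trans_addr n s) = int (succ0 s)" "m (trans_addr n s + 1) = int (succ1 s)"
    "m (count_addr n L (succ0 s)) = int (count L (succ0 s))"
    "m (count_addr n L (succ1 s)) = int (count L (succ1 s))"
  shows "\<exists>m'. run prog (21, m) 13 = (if Suc s < Q then 21 else 34, m') \<and> m' 2 = 1 \<and>
    m' 6 = int (trans_addr n (Suc s)) \<and> m' 7 = int (count_addr n (Suc L) (Suc s)) \<and>
    m' 8 = int (Q - Suc s) \<and> m' (count_addr n (Suc L) s) = int (count (Suc L) s) \<and>
    (\<forall>a. a \<notin> {4, 5, 6, 7, 8, count_addr n (Suc L) s} \<longrightarrow> m' a = m a)"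
proof -
  have "(Suc 0 < Q - s) = (Suc s < Q)" "int (Q - s) - 1 = int (Q - Suc s)"
    using assms(1) by linarith+
  then show ?thesis
    using assms by (simp add: nat_int_add exec_main del: of_nat_add of_nat_mult of_nat_diff)
qed

lemma run_count_row:
  assumes "m0 2 = 1" "m0 6 = int (trans_addr n 0)" "m0 7 = int (count_addr n (Suc L) 0)"
    "m0 8 = int Q" "m0 9 = int (count_addr n L 0)"
    "\<forall>s<Q. m0 (trans_addr n s) = int (succ0 s) \<and> m0 (trans_addr n s + 1) = int (succ1 s)"
    "\<forall>s\<le>Q. m0 (count_addr n L s) = int (count L s)"
  shows "\<exists>t m. t \<le> 13 * Q \<and> run prog (21, m0) t = (34, m) \<and> m 2 = 1 \<and>
    m 7 = int (count_addr n (Suc L) Q) \<and>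
    (\<forall>s<Q. m (count_addr n (Suc L) s) = int (count (Suc L) s)) \<and>
    (\<forall>a. a \<notin> {4, 5, 6, 7, 8} \<and> \<not> (count_addr n (Suc L) 0 \<le> a \<and> a < count_addr n (Suc L) Q)
       \<longrightarrow> m a = m0 a)"
proof -
  define pc where "pc s = (if s < Q then 21 else 34 :: nat)" for s
  define I where "I s m \<longleftrightarrow> m 2 = 1 \<and> m 6 = int (trans_addr n s) \<and>
     m 7 = int (count_addr n (Suc L) s) \<and> m 8 = int (Q - s) \<and> m 9 = int (count_addr n L 0) \<and>
     (\<forall>t<s. m (count_addr n (Suc L) t) = int (count (Suc L) t)) \<and>
     (\<forall>a. a \<notin> {4, 5, 6, 7, 8} \<and> \<not> (count_addr n (Suc L) 0 \<le> a \<and> a < count_addr n (Suc L) s)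
        \<longrightarrow> m a = m0 a)"
    for s m
  have "\<exists>t m'. t \<le> 13 \<and> run prog (pc s, m) t = (pc (Suc s), m') \<and> I (Suc s) m'"
    if "s < Q" "I s m" for s m
  proof -
    have old: "m a = m0 a" if "a < count_addr n (Suc L) 0" "a \<notin> {4, 5, 6, 7, 8}" for a
      using \<open>I s m\<close> that unfolding I_def by auto
    have "count_addr n L (succ0 s) < count_addr n (Suc L) 0"
      "count_addr n L (succ1 s) < count_addr n (Suc L) 0"
      using succ0_less[of s] succ1_le[of s] by simp_all
    then obtain m' where m': "run prog (21, m) 13 = (if Suc s < Q then 21 else 34, m')" "m' 2 = 1"
      "m' 6 = int (trans_addr n (Suc s))" "m' 7 = int (count_addr n (Suc L) (Suc s))"
      "m' 8 = int (Q - Suc s)" "m' (count_addr n (Suc L) s) = int (count (Suc L) s)"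
      "\<forall>a. a \<notin> {4, 5, 6, 7, 8, count_addr n (Suc L) s} \<longrightarrow> m' a = m a"
      using run_count_cell[OF \<open>s < Q\<close>, of m n L] \<open>I s m\<close> assms(6,7) \<open>s < Q\<close>
        old[of "trans_addr n s"] old[of "trans_addr n s + 1"]
        old[of "count_addr n L (succ0 s)"] old[of "count_addr n L (succ1 s)"]
        succ0_less[of s] succ1_le[of s]
      unfolding I_def by auto
    have "I (Suc s) m'"
      using m' \<open>I s m\<close> unfolding I_def by (auto simp: less_Suc_eq)
    then show ?thesis
      using m'(1) \<open>s < Q\<close> by (intro exI[of _ 13] exI[of _ m']) (simp add: pc_def)
  qed
  from run_iterate[of Q I 13 prog pc, OF this, of 0 m0]
  obtain t m where "t \<le> 13 * Q" "run prog (21, m0) t = (34, m)" "I Q m"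
    using assms Q_pos by (auto simp: I_def pc_def)
  then show ?thesis
    by (intro exI[of _ t] exI[of _ m]) (auto simp: I_def)
qed

lemma run_next_row_exit:
  assumes "L < n" "m 2 = 1" "m 7 = int (count_addr n (Suc L) Q)" "m 9 = int (count_addr n L 0)"
    "m 10 = int (n - L)" "m 11 = int Q + 1"
  shows "run prog (34, m) 4 = (if Suc L < n then 19 else 38, m(9 := int (count_addr n (Suc L) 0),
    7 := int (count_addr n (Suc (Suc L)) 0), 10 := int (n - Suc L)))"
proof -
  have "run prog (34, m) 4 = (if 0 < int (n - L) - 1 then 19 else 38,
      m(9 := int (count_addr n L 0) + (int Q + 1), 7 := int (count_addr n (Suc L) Q) + 1,
         10 := int (n - L) - 1))"
    using assms by (simp add: run_step_numeral run_step length_prog prog_nth_main main_def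
        del: of_nat_add of_nat_mult of_nat_diff)
  moreover have "int (count_addr n L 0) + (int Q + 1) = int (count_addr n (Suc L) 0)"
    "int (count_addr n (Suc L) Q) + 1 = int (count_addr n (Suc (Suc L)) 0)"
    "int (n - L) - 1 = int (n - Suc L)" "(0 < int (n - L) - 1) = (Suc L < n)"
    using assms(1) by simp_all linarith+
  ultimately show ?thesis
    by (simp only:)
qed

lemma run_count_next_row:
  assumes "counted n r L m" "L < n"
  shows "\<exists>t m'. t \<le> 6 + 13 * Q \<and> run prog (19, m) t = (if Suc L < n then 19 else 38, m') \<and>
    counted n r (Suc L) m'"
proof -
  note inv = assms(1)[unfolded counted_def prepared_def]
  define m1 where "m1 = m(8 := int Q, 6 := int (trans_addr n 0))"
  have enter: "run prog (19, m) 2 = (21, m1)"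
    unfolding m1_def using inv by (simp add: exec_main del: of_nat_add of_nat_mult of_nat_diff)
  obtain t m2 where m2: "t \<le> 13 * Q" "run prog (21, m1) t = (34, m2)" "m2 2 = 1"
    "m2 7 = int (count_addr n (Suc L) Q)"
    "\<forall>s<Q. m2 (count_addr n (Suc L) s) = int (count (Suc L) s)"
    "\<forall>a. a \<notin> {4, 5, 6, 7, 8} \<and> \<not> (count_addr n (Suc L) 0 \<le> a \<and> a < count_addr n (Suc L) Q)
       \<longrightarrow> m2 a = m1 a"
    using run_count_row[of m1 n L] inv by (auto simp: m1_def)
  have unchanged: "m2 a = m a" if "a \<notin> {4, 5, 6, 7, 8}"
    "\<not> (count_addr n (Suc L) 0 \<le> a \<and> a < count_addr n (Suc L) Q)" for a
    using m2(6) that by (auto simp: m1_def)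
  define m3 where "m3 = m2(9 := int (count_addr n (Suc L) 0),
    7 := int (count_addr n (Suc (Suc L)) 0), 10 := int (n - Suc L))"
  have leave: "run prog (34, m2) 4 = (if Suc L < n then 19 else 38, m3)"
    unfolding m3_def using run_next_row_exit[OF assms(2) m2(3,4)]
      unchanged[of 9] unchanged[of 10] unchanged[of 11] inv by simp
  have unchanged3: "m3 a = m a" if "a \<notin> {4, 5, 6, 7, 8, 9, 10}"
    "\<not> (count_addr n (Suc L) 0 \<le> a \<and> a < count_addr n (Suc L) Q)" for a
    using unchanged that by (simp add: m3_def)
  have "counted n r (Suc L) m3"
    unfolding counted_def
  proof (intro conjI allI impI)
    show "prepared n r m3"
      using assms(1) unfolding counted_def
      by (rule conjunct1 [THEN prepared_cong]) (use unchanged3 inv in auto)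
    fix L' s :: nat assume "L' \<le> Suc L \<and> s \<le> Q"
    then consider "L' \<le> L" | "L' = Suc L" "s < Q" | "L' = Suc L" "s = Q"
      by linarith
    then show "m3 (count_addr n L' s) = int (count L' s)"
    proof cases
      case 1
      then have "L' * (Q + 1) + s \<le> L * (Q + 1) + Q"
        using \<open>L' \<le> Suc L \<and> s \<le> Q\<close> by (metis add_le_mono mult_le_mono1)
      then show ?thesis using 1 unchanged3 inv \<open>L' \<le> Suc L \<and> s \<le> Q\<close> by simp
    next
      case 2
      then show ?thesis using m2(5) by (simp add: m3_def)
    next
      case 3
      then show ?thesis using unchanged3[of "count_addr n (Suc L) Q"] inv by simp
    qed
  next
    fix a assume "count_addr n (Suc L) Q \<le> a"
    then show "m3 a = 0" using unchanged3 inv by simp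
  qed (use unchanged3[of 14] inv in \<open>simp_all add: m3_def\<close>)
  moreover have "run prog (19, m) (2 + (t + 4)) = (if Suc L < n then 19 else 38, m3)"
    using enter m2(2) leave by (simp only: run_add)
  ultimately show ?thesis
    using m2(1) by (intro exI[of _ "2 + (t + 4)"]) auto
qed

lemma run_count_rows:
  assumes "counted n r 0 m"
  shows "\<exists>t m'. t \<le> 2 + n * (6 + 13 * Q) \<and> run prog (17, m) t = (38, m') \<and> counted n r n m'"
proof (cases "n = 0")
  case True
  then have "run prog (17, m) 2 = (38, m)"
    using assms by (simp add: counted_def exec_main)
  then show ?thesis using assms True by (intro exI[of _ 2]) auto
next
  case False
  then have enter: "run prog (17, m) 1 = (19, m)"
    using assms by (simp add: counted_def exec_main)
  have "\<exists>t m'. t \<le> 6 + 13 * Q \<and> run prog (if L < n then 19 else 38, m) t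
      = (if Suc L < n then 19 else 38, m') \<and> counted n r (Suc L) m'"
    if "L < n" "counted n r L m" for L m
    using run_count_next_row[OF that(2,1)] that(1) by simp
  from run_iterate[of n "counted n r" "6 + 13 * Q" prog "\<lambda>L. if L < n then 19 else 38",
      OF this, of 0 m] False assms
  obtain t m' where "t \<le> (6 + 13 * Q) * n" "run prog (19, m) t = (38, m')" "counted n r n m'"
    by auto
  moreover from this(2) have "run prog (17, m) (1 + t) = (38, m')"
    using enter by (simp only: run_add)
  ultimately show ?thesis
    by (intro exI[of _ "1 + t"] exI[of _ m']) (auto simp: mult.commute)
qed

text \<open>Cells 1--19 are registers, so the first 19 output bits are buffered at \<open>n + 20, \<dots>, n + 38\<close>
  and only copied into place once the decoding is finished.\<close>

definition out_addr :: "nat \<Rightarrow> nat \<Rightarrow> nat" where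
  "out_addr n k = (if k < 19 then n + 20 + k else k + 1)"

lemma out_addr_inj: "i < n \<Longrightarrow> j < n \<Longrightarrow> out_addr n i = out_addr n j \<Longrightarrow> i = j"
  by (auto simp: out_addr_def split: if_splits)

lemma out_addr_range: "k < n \<Longrightarrow> 20 \<le> out_addr n k \<and> out_addr n k \<le> n + 38"
  by (auto simp: out_addr_def)

lemma run_decode_bit:
  assumes "s < Q" "k < n" "m 2 = 1" "m 3 = 0" "m 12 = int (n + 39)" "m 14 = int s"
    "m (trans_addr n s) = int (succ0 s)" "m (trans_addr n s + 1) = int (succ1 s)"
    "m 9 = int (count_addr n L 0)" "m (count_addr n L (succ0 s)) = int (count L (succ0 s))"
    "m 1 = int r" "m 7 = int (k + 1)" "m 15 = 19 - int k" "m 19 = int (n + 20) - 1"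
    "m 10 = int (n - k)" "m 11 = int Q + 1"
  shows "\<exists>t. t \<le> 20 \<and> (\<exists>m'. run prog (45, m) t = (if k + 1 < n then 45 else 69, m') \<and>
    m' 1 = int (if r \<le> count L (succ0 s) then r else r - count L (succ0 s)) \<and>
    m' 14 = int (if r \<le> count L (succ0 s) then succ0 s else succ1 s) \<and>
    m' (out_addr n k) = (if r \<le> count L (succ0 s) then 0 else 1) \<and>
    m' 7 = int (k + 1 + 1) \<and> m' 15 = 19 - int (k + 1) \<and> m' 9 = m 9 - (int Q + 1) \<and>
    m' 10 = int (n - (k + 1)) \<and>
    (\<forall>a. a \<notin> {1,4,6,7,9,10,14,15,16,17,18} \<and> a \<noteq> out_addr n k \<longrightarrow> m' a = m a))"
proof -
  define v where "v = count L (succ0 s)"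
  have arith: "int (k + 1) + 1 = int (k + 1 + 1)" "19 - int k - 1 = 19 - int (k + 1)"
    "int (n - k) - 1 = int (n - (k + 1))" "(0 < int (n - (k + 1))) = (k + 1 < n)"
    "nat (int (k + 1) + (int (n + 20) - 1)) = n + 20 + k" "nat (int (k + 1)) = k + 1"
    using assms(2) by simp_all linarith+
  note exec = nat_int_add of_nat_add_double nat_of_nat_plus_1 run_step_numeral run_step
    length_prog prog_nth_main main_def
  consider (zero_buffered) "r \<le> v" "k < 19" | (zero_direct) "r \<le> v" "\<not> k < 19"
    | (one_buffered) "\<not> r \<le> v" "k < 19" | (one_direct) "\<not> r \<le> v" "\<not> k < 19"
    by blast
  then show ?thesis
  proof cases
    case zero_buffered
    then have "(0 < int r - int v) = False" "(0 < 19 - int k) = True"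
      by auto
    then show ?thesis
      apply (intro exI[of _ 19])
      using assms zero_buffered arith unfolding v_def out_addr_def
      by (simp add: exec del: of_nat_add of_nat_mult of_nat_diff)
  next
    case zero_direct
    then have "(0 < int r - int v) = False" "(0 < 19 - int k) = False"
      by auto
    then show ?thesis
      apply (intro exI[of _ 19])
      using assms zero_direct arith unfolding v_def out_addr_def
      by (simp add: exec del: of_nat_add of_nat_mult of_nat_diff)
  next
    case one_buffered
    then have "(0 < int r - int v) = True" "(0 < 19 - int k) = True" "int r - int v + 0 = int (r - v)"
      by auto
    then show ?thesis
      apply (intro exI[of _ 20])
      using assms one_buffered arith unfolding v_def out_addr_def
      by (simp add: exec del: of_nat_add of_nat_mult of_nat_diff)
  next
    case one_direct
    then have "(0 < int r - int v) = True" "(0 < 19 - int k) = False" "int r - int v + 0 = int (r - v)"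
      by auto
    then show ?thesis
      apply (intro exI[of _ 20])
      using assms one_direct arith unfolding v_def out_addr_def
      by (simp add: exec del: of_nat_add of_nat_mult of_nat_diff)
  qed
qed

definition decoding :: "nat \<Rightarrow> nat \<Rightarrow> nat \<Rightarrow> (nat \<Rightarrow> int) \<Rightarrow> bool" where
  "decoding n mm k m \<longleftrightarrow> (\<exists>r s. prepared n r m \<and> s < Q \<and> 1 \<le> r \<and> r \<le> count (n - k) s \<and>
     drop k (unrank 0 n mm) = unrank s (n - k) r \<and> m 14 = int s \<and>
     (\<forall>L s'. L \<le> n \<and> s' \<le> Q \<longrightarrow> m (count_addr n L s') = int (count L s')) \<and>
     m 9 + int Q + 1 = int (count_addr n (n - k) 0) \<and> m 7 = int (k + 1) \<and> m 15 = 19 - int k \<and>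
     m 19 = int (n + 20) - 1 \<and> m 10 = int (n - k) \<and>
     (\<forall>i<k. m (out_addr n i) = of_bool (unrank 0 n mm ! i)))"

lemma unrank_Suc_nth_drop:
  assumes "drop k xs = unrank s (Suc L) r" "k < length xs"
  shows "xs ! k = (\<not> r \<le> count L (succ0 s))"
    "drop (Suc k) xs = (if r \<le> count L (succ0 s) then unrank (succ0 s) L r
                        else unrank (succ1 s) L (r - count L (succ0 s)))"
  using assms Cons_nth_drop_Suc[OF assms(2)] by (auto split: if_splits)

lemma run_decode_step:
  assumes "decoding n mm k m" "k < n"
  shows "\<exists>t m'. t \<le> 20 \<and> run prog (45, m) t = (if Suc k < n then 45 else 69, m') \<and>
    decoding n mm (Suc k) m'"
proof -
  obtain r s where prep: "prepared n r m" and s: "s < Q" and r: "1 \<le> r" "r \<le> count (n - k) s"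
    and rest: "drop k (unrank 0 n mm) = unrank s (n - k) r" "m 14 = int s"
    and rows: "\<forall>L s'. L \<le> n \<and> s' \<le> Q \<longrightarrow> m (count_addr n L s') = int (count L s')"
    and regs: "m 9 + int Q + 1 = int (count_addr n (n - k) 0)" "m 7 = int (k + 1)"
      "m 15 = 19 - int k" "m 19 = int (n + 20) - 1" "m 10 = int (n - k)"
    and bits: "\<forall>i<k. m (out_addr n i) = of_bool (unrank 0 n mm ! i)"
    using assms(1) unfolding decoding_def by blast
  define L where "L = n - Suc k"
  have nk: "n - k = Suc L" using assms(2) by (simp add: L_def)
  define v where "v = count L (succ0 s)"
  define r' where "r' = (if r \<le> v then r else r - v)"
  define s' where "s' = (if r \<le> v then succ0 s else succ1 s)"
  have "m 9 = int (count_addr n L 0)"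
    using regs(1) nk by (simp add: algebra_simps)
  moreover have "m (count_addr n L (succ0 s)) = int v"
    using rows succ0_less[of s] by (simp add: L_def v_def)
  ultimately obtain t m' where run: "t \<le> 20" "run prog (45, m) t = (if k + 1 < n then 45 else 69, m')"
    and m': "m' 1 = int r'" "m' 14 = int s'" "m' (out_addr n k) = (if r \<le> v then 0 else 1)"
      "m' 7 = int (k + 1 + 1)" "m' 15 = 19 - int (k + 1)" "m' 9 = m 9 - (int Q + 1)"
      "m' 10 = int (n - (k + 1))"
    and unchanged: "\<forall>a. a \<notin> {1,4,6,7,9,10,14,15,16,17,18} \<and> a \<noteq> out_addr n k \<longrightarrow> m' a = m a"
    using run_decode_bit[OF s assms(2), of m L r] prep rest(2) regs s
    unfolding prepared_def r'_def s'_def v_def by auto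
  have out: "20 \<le> out_addr n k" "out_addr n k \<le> n + 38"
    using out_addr_range[OF assms(2)] by simp_all
  have k_bit: "unrank 0 n mm ! k = (\<not> r \<le> v)"
    and drop_Suc: "drop (Suc k) (unrank 0 n mm) = unrank s' L r'"
    using unrank_Suc_nth_drop[of k "unrank 0 n mm" s L r] rest(1) nk assms(2)
    by (simp_all add: v_def r'_def s'_def)
  have s': "s' < Q" and r': "1 \<le> r'" "r' \<le> count L s'"
    using greedy_step_in_range[OF s r(1)] r(2) nk unfolding s'_def r'_def v_def by simp_all
  have "decoding n mm (Suc k) m'"
    unfolding decoding_def
  proof (intro exI conjI allI impI)
    show "prepared n r' m'"
      by (rule prepared_cong[of n r m m' r', OF prep m'(1)]) (use unchanged out in auto)
    show "drop (Suc k) (unrank 0 n mm) = unrank s' (n - Suc k) r'"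
      using drop_Suc by (simp add: L_def)
    fix L' s'' assume "L' \<le> n \<and> s'' \<le> Q"
    then show "m' (count_addr n L' s'') = int (count L' s'')"
      using rows unchanged out by auto
  next
    fix i assume "i < Suc k"
    show "m' (out_addr n i) = of_bool (unrank 0 n mm ! i)"
    proof (cases "i = k")
      case True
      then show ?thesis using m'(3) k_bit by simp
    next
      case False
      then have "i < k" using \<open>i < Suc k\<close> by simp
      then have "out_addr n i \<noteq> out_addr n k" "20 \<le> out_addr n i"
        using out_addr_inj[of i n k] out_addr_range[of i n] assms(2) by auto
      then show ?thesis using bits unchanged \<open>i < k\<close> by auto
    qed
  qed (use s' r' m' regs unchanged out nk in \<open>simp_all add: L_def\<close>)
  then show ?thesis
    using run by auto
qed

lemma run_decode:
  assumes "counted n mm n m" "1 \<le> mm" "mm \<le> count n 0"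
  shows "\<exists>t m'. t \<le> 7 + 20 * n \<and> run prog (38, m) t = (69, m') \<and> decoding n mm n m'"
proof -
  note inv = assms(1)[unfolded counted_def]
  define m1 where "m1 = m(9 := m 9 - (int Q + 1), 15 := 19, 7 := 1, 19 := int (n + 20) - 1,
    10 := int n)"
  have enter: "run prog (38, m) 5 = (43, m1)"
    unfolding m1_def using inv by (simp add: prepared_def exec_main del: of_nat_add of_nat_mult of_nat_diff)
  have "prepared n mm m1"
    using prepared_cong[of n mm m m1 mm] inv by (simp add: m1_def prepared_def)
  then have start: "decoding n mm 0 m1"
    unfolding decoding_def using inv assms(2,3) Q_pos
    by (intro exI[of _ mm] exI[of _ 0]) (auto simp: m1_def)
  show ?thesis
  proof (cases "n = 0")
    case True
    then have "run prog (43, m1) 2 = (69, m1)"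
      by (simp add: m1_def exec_main)
    then have "run prog (38, m) (5 + 2) = (69, m1)"
      using enter by (simp only: run_add)
    then show ?thesis
      using start True by (intro exI[of _ "5 + 2"] exI[of _ m1]) simp
  next
    case False
    have "\<exists>t m'. t \<le> 20 \<and> run prog (if k < n then 45 else 69, m) t
        = (if Suc k < n then 45 else 69, m') \<and> decoding n mm (Suc k) m'"
      if "k < n" "decoding n mm k m" for k m
      using run_decode_step[OF that(2,1)] that(1) by simp
    from run_iterate[of n "decoding n mm" 20 prog "\<lambda>k. if k < n then 45 else 69", OF this, of 0 m1]
    obtain t m' where loop: "t \<le> 20 * n" "run prog (45, m1) t = (69, m')" "decoding n mm n m'"
      using start False by auto
    have "run prog (43, m1) 1 = (45, m1)"
      using False by (simp add: m1_def exec_main)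
    then have "run prog (38, m) (5 + (1 + t)) = (69, m')"
      using enter loop(2) by (simp only: run_add)
    then show ?thesis
      using loop by (intro exI[of _ "5 + (1 + t)"] exI[of _ m']) simp
  qed
qed

lemma run_copy_buffer:
  assumes "m 3 = 0" "m 13 = int (n + 20)"
  shows "\<exists>m'. run prog (69, m) 40 = (109, m') \<and> (\<forall>k<n. m' (k + 1) = m (out_addr n k))"
proof -
  have num: "nat (int x + numeral k) = x + numeral k" "nat (numeral k + int x) = numeral k + x"
    "nat (1 + int x) = 1 + x" for x k
    by (simp_all add: nat_add_distrib)
  define m' where "m' = m(0 := int (n + 20), 19 := m (38 + n), 18 := m (37 + n), 17 := m (36 + n),
    16 := m (35 + n), 15 := m (34 + n), 14 := m (33 + n), 13 := m (32 + n), 12 := m (31 + n),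
    11 := m (30 + n), 10 := m (29 + n), 9 := m (28 + n), 8 := m (27 + n), 7 := m (26 + n),
    6 := m (25 + n), 5 := m (24 + n), 4 := m (23 + n), 3 := m (22 + n), 2 := m (21 + n),
    Suc 0 := m (n + 20))"
  have "run prog (69, m) 40 = (109, m')"
    unfolding m'_def using assms
    by (simp add: num exec_main del: of_nat_add of_nat_mult of_nat_diff)
  moreover have "m' (k + 1) = m (out_addr n k)" for k
  proof (cases "k < 19")
    case True
    then show ?thesis
      unfolding m'_def out_addr_def by (auto simp: fun_upd_apply add.commute) presburger
  next
    case False
    then show ?thesis
      unfolding m'_def out_addr_def by (auto simp: fun_upd_apply)
  qed
  ultimately show ?thesis by blast
qed

lemma halted_109: "halted prog (109, m)"
  by (simp add: halted_def prog_nth_main main_def)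

lemma run_prog:
  assumes "1 \<le> mm" "mm \<le> card (WWL n \<beta> p)"
  shows "\<exists>t \<le> (100 + 20 * Q) * (n + 1). halted prog (run prog (init n mm) t) \<and>
    (\<forall>k<n. snd (run prog (init n mm) t) (k + 1) = of_bool (unrank 0 n mm ! k))"
proof -
  obtain t1 m1 where 1: "t1 \<le> 9 + 6 * Q" "run prog (init n mm) t1 = (8, m1)" "prepared n mm m1"
    "m1 6 = int (count_addr n 0 0)" "m1 14 = 0" "\<forall>a \<ge> count_addr n 0 0. m1 a = 0"
    using run_setup by blast
  obtain t2 m2 where 2: "t2 \<le> 5 + 4 * Q" "run prog (8, m1) t2 = (17, m2)" "counted n mm 0 m2"
    using run_row0[OF 1(3-6)] by blast
  obtain t3 m3 where 3: "t3 \<le> 2 + n * (6 + 13 * Q)" "run prog (17, m2) t3 = (38, m3)" "counted n mm n m3"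
    using run_count_rows[OF 2(3)] by blast
  obtain t4 m4 where 4: "t4 \<le> 7 + 20 * n" "run prog (38, m3) t4 = (69, m4)" "decoding n mm n m4"
    using run_decode[OF 3(3) assms(1)] assms(2) card_WWL by auto
  have "m4 3 = 0" "m4 13 = int (n + 20)"
    "\<forall>k<n. m4 (out_addr n k) = of_bool (unrank 0 n mm ! k)"
    using 4(3) unfolding decoding_def prepared_def by auto
  then obtain m5 where 5: "run prog (69, m4) 40 = (109, m5)"
    "\<forall>k<n. m5 (k + 1) = of_bool (unrank 0 n mm ! k)"
    using run_copy_buffer[of m4 n] by auto
  have "run prog (init n mm) (t1 + (t2 + (t3 + (t4 + 40)))) = (109, m5)"
    using 1(2) 2(2) 3(2) 4(2) 5(1) by (simp only: run_add)
  moreover have "t1 + (t2 + (t3 + (t4 + 40))) \<le> (100 + 20 * Q) * (n + 1)"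
    using 1(1) 2(1) 3(1) 4(1) by (simp add: algebra_simps)
  ultimately show ?thesis
    using 5(2) halted_109 by (intro exI[of _ "t1 + (t2 + (t3 + (t4 + 40)))"]) auto
qed

end

theorem theorem10:
  fixes \<beta> p :: nat
  assumes "\<beta> > 0" and "p > 0"
  shows "\<exists>prog :: instr list. \<exists>C :: nat. \<forall>n m.
           1 \<le> m \<and> m \<le> card (WWL n \<beta> p) \<longrightarrow>
           (\<exists>t \<le> C * (n + 1).
               halted prog (run prog (init n m) t)
             \<and> card (used_cells prog (init n m) t) \<le> C * (n + 1)
             \<and> (\<exists>c \<in> WWL n \<beta> p. ord_in (WWL n \<beta> p) c = m
                   \<and> (\<forall>k<n. snd (run prog (init n m) t) (k + 1) = (if c ! k then 1 else 0))))"
proof -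
  interpret wwl_automaton \<beta> p
    using assms(1) by unfold_locales
  define C where "C = 3 * (100 + 20 * Q)"
  have "\<exists>t \<le> C * (n + 1). halted prog (run prog (init n m) t)
      \<and> card (used_cells prog (init n m) t) \<le> C * (n + 1)
      \<and> (\<exists>c \<in> WWL n \<beta> p. ord_in (WWL n \<beta> p) c = m
            \<and> (\<forall>k<n. snd (run prog (init n m) t) (k + 1) = (if c ! k then 1 else 0)))"
    if m: "1 \<le> m" "m \<le> card (WWL n \<beta> p)" for n m
  proof -
    obtain t where t: "t \<le> (100 + 20 * Q) * (n + 1)" "halted prog (run prog (init n m) t)"
      "\<forall>k<n. snd (run prog (init n m) t) (k + 1) = of_bool (unrank 0 n m ! k)"
      using run_prog[OF m] by blast
    moreover have "card (used_cells prog (init n m) t) \<le> C * (n + 1)"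
      using card_used_cells_le[of prog "init n m" t] t(1) unfolding C_def by linarith
    moreover have "t \<le> C * (n + 1)"
      using t(1) unfolding C_def by linarith
    ultimately show ?thesis
      using ord_in_unrank[OF m] by (intro exI[of _ t] conjI bexI[of _ "unrank 0 n m"]) auto
  qed
  then show ?thesis by blast
qed

end
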